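(* Let $\mathcal{D}$ be a category with all pullbacks, and let $\mathcal{C}$ be a full subcategory of $\mathcal{D}$ that is equal to its essential image (closed under isomorphism), with the property that for any object $A$ of $\mathcal{C}$ and any object $B$ of $\mathcal{D}$, if $\mathrm{Hom}_{\mathcal{D}}(B,A)\neq\varnothing$ then $B$ is in $\mathcal{C}$. Let $\mathcal{D}'$ be the full subcategory of $\mathcal{D}$ on the objects not in $\mathcal{C}$. Then $\mathrm{Tw}(\mathcal{D}')$ has all pullbacks.
   Context: For a category $\mathcal{D}$, the Grothendieck twist $\mathrm{Tw}(\mathcal{D})$ is the category whose objects are finite families $\{a_i\}_{i\in I}$ ($I$ a finite set, each $a_i$ an object of $\mathcal{D}$), and whose morphisms $\{a_i\}_{i\in I}\to\{b_j\}_{j\in J}$ are pairs consisting of a function $f:I\to J$ and morphisms $F_i:a_i\to b_{f(i)}$ in $\mathcal{D}$ for all $i\in I$; composition composes set maps and components. *)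

theory Defs
  imports "HOL-Library.FuncSet"
begin

text \<open>Categories as explicit structures (object set, arrow set, domain, codomain,
identity, composition; Comp g f means g after f).\<close>

record ('o,'m) cat =
  Obj :: "'o set"
  Arr :: "'m set"
  Dom :: "'m \<Rightarrow> 'o"
  Cod :: "'m \<Rightarrow> 'o"
  Id  :: "'o \<Rightarrow> 'm"
  Comp :: "'m \<Rightarrow> 'm \<Rightarrow> 'm"

definition category :: "('o,'m) cat \<Rightarrow> bool" where
  "category C \<longleftrightarrow>
     (\<forall>f\<in>Arr C. Dom C f \<in> Obj C \<and> Cod C f \<in> Obj C) \<and>
     (\<forall>a\<in>Obj C. Id C a \<in> Arr C \<and> Dom C (Id C a) = a \<and> Cod C (Id C a) = a) \<and>
     (\<forall>f\<in>Arr C. \<forall>g\<in>Arr C. Cod C f = Dom C g \<longrightarrow>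
        Comp C g f \<in> Arr C \<and> Dom C (Comp C g f) = Dom C f \<and> Cod C (Comp C g f) = Cod C g) \<and>
     (\<forall>f\<in>Arr C. Comp C f (Id C (Dom C f)) = f \<and> Comp C (Id C (Cod C f)) f = f) \<and>
     (\<forall>f\<in>Arr C. \<forall>g\<in>Arr C. \<forall>h\<in>Arr C. Cod C f = Dom C g \<longrightarrow> Cod C g = Dom C h \<longrightarrow>
        Comp C h (Comp C g f) = Comp C (Comp C h g) f)"

definition hom :: "('o,'m) cat \<Rightarrow> 'o \<Rightarrow> 'o \<Rightarrow> 'm set" where
  "hom C a b = {f \<in> Arr C. Dom C f = a \<and> Cod C f = b}"

definition iso_arr :: "('o,'m) cat \<Rightarrow> 'm \<Rightarrow> bool" where
  "iso_arr C f \<longleftrightarrow> f \<in> Arr C \<and> (\<exists>g\<in>Arr C. Dom C g = Cod C f \<and> Cod C g = Dom C f \<and>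
      Comp C g f = Id C (Dom C f) \<and> Comp C f g = Id C (Cod C f))"

definition is_pullback :: "('o,'m) cat \<Rightarrow> 'm \<Rightarrow> 'm \<Rightarrow> 'm \<Rightarrow> 'm \<Rightarrow> bool" where
  "is_pullback C f g p q \<longleftrightarrow>
     f \<in> Arr C \<and> g \<in> Arr C \<and> p \<in> Arr C \<and> q \<in> Arr C \<and>
     Cod C f = Cod C g \<and> Dom C p = Dom C q \<and> Cod C p = Dom C f \<and> Cod C q = Dom C g \<and>
     Comp C f p = Comp C g q \<and>
     (\<forall>p'\<in>Arr C. \<forall>q'\<in>Arr C. Dom C p' = Dom C q' \<and> Cod C p' = Dom C f \<and> Cod C q' = Dom C g \<and>
        Comp C f p' = Comp C g q' \<longrightarrow>
        (\<exists>!u. u \<in> hom C (Dom C p') (Dom C p) \<and> Comp C p u = p' \<and> Comp C q u = q'))"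

definition has_pullbacks :: "('o,'m) cat \<Rightarrow> bool" where
  "has_pullbacks C \<longleftrightarrow>
     (\<forall>f\<in>Arr C. \<forall>g\<in>Arr C. Cod C f = Cod C g \<longrightarrow> (\<exists>p q. is_pullback C f g p q))"

definition full_sub :: "('o,'m) cat \<Rightarrow> 'o set \<Rightarrow> ('o,'m) cat" where
  "full_sub C S = C\<lparr>Obj := S, Arr := {f \<in> Arr C. Dom C f \<in> S \<and> Cod C f \<in> S}\<rparr>"

text \<open>An object is a finite family (I, a) with I a finite set of
indices (taken to be natural numbers) and a i an object for i in I (extensional).
A morphism is (source, target, f, F) with f : I \<rightarrow> J and F i : a i \<rightarrow> b (f i).\<close>

type_synonym 'o fam = "nat set \<times> (nat \<Rightarrow> 'o)"
type_synonym ('o,'m) twarr = "'o fam \<times> 'o fam \<times> (nat \<Rightarrow> nat) \<times> (nat \<Rightarrow> 'm)"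

definition tw_obj :: "('o,'m) cat \<Rightarrow> 'o fam set" where
  "tw_obj C = {(I, a). finite I \<and> a \<in> extensional I \<and> (\<forall>i\<in>I. a i \<in> Obj C)}"

definition tw_arr :: "('o,'m) cat \<Rightarrow> ('o,'m) twarr set" where
  "tw_arr C = {((I, a), (J, b), f, F). (I, a) \<in> tw_obj C \<and> (J, b) \<in> tw_obj C \<and>
      f \<in> I \<rightarrow>\<^sub>E J \<and> F \<in> extensional I \<and> (\<forall>i\<in>I. F i \<in> hom C (a i) (b (f i)))}"

definition Tw :: "('o,'m) cat \<Rightarrow> ('o fam, ('o,'m) twarr) cat" where
  "Tw C = \<lparr> Obj = tw_obj C,
            Arr = tw_arr C,
            Dom = (\<lambda>(X, Y, f, F). X),
            Cod = (\<lambda>(X, Y, f, F). Y),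
            Id = (\<lambda>(I, a). ((I, a), (I, a), (\<lambda>i\<in>I. i), (\<lambda>i\<in>I. Id C (a i)))),
            Comp = (\<lambda>(Y', Z, g, G) ((I, a), Y, f, F).
                      ((I, a), Z, (\<lambda>i\<in>I. g (f i)), (\<lambda>i\<in>I. Comp C (G (f i)) (F i)))) \<rparr>"

end

theory Submission
  imports Defs "HOL-Library.Nat_Bijection"
begin

text \<open>The pullback of \<open>(I, a) \<rightarrow> (K, c) \<leftarrow> (J, b)\<close> in the twist is the family of the
  componentwise pullbacks \<open>a i \<times>\<^bsub>c k\<^esub> b j\<close> over the pairs \<open>(i, j)\<close> lying over a common \<open>k\<close>.
  In the full subcategory on a set \<open>T\<close> of objects such a componentwise pullback may fall outside
  \<open>T\<close>; those pairs are simply dropped. No cone is lost as long as \<open>T\<close> is closed under codomains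
  of arrows: a cone component into \<open>a i\<close> and \<open>b j\<close> starts at an object of \<open>T\<close> and factors
  through \<open>a i \<times> b j\<close>, which therefore lies in \<open>T\<close>. For \<open>T = Obj D - S\<close> this closure is the
  hypothesis on \<open>S\<close>.\<close>

lemma full_sub_simps [simp]:
  "Obj (full_sub D T) = T" "Arr (full_sub D T) = {f \<in> Arr D. Dom D f \<in> T \<and> Cod D f \<in> T}"
  "Dom (full_sub D T) = Dom D" "Cod (full_sub D T) = Cod D"
  "Id (full_sub D T) = Id D" "Comp (full_sub D T) = Comp D"
  by (simp_all add: full_sub_def)

lemma hom_full_sub_iff: "h \<in> hom (full_sub D T) x y \<longleftrightarrow> h \<in> hom D x y \<and> x \<in> T \<and> y \<in> T"
  by (auto simp: hom_def)

lemma Tw_simps [simp]: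
  "Obj (Tw C) = tw_obj C" "Arr (Tw C) = tw_arr C"
  "Dom (Tw C) (X, Y, f, F) = X" "Cod (Tw C) (X, Y, f, F) = Y"
  "Comp (Tw C) (Y', Z, g, G) ((I, a), Y, f, F) =
     ((I, a), Z, (\<lambda>i\<in>I. g (f i)), (\<lambda>i\<in>I. Comp C (G (f i)) (F i)))"
  by (simp_all add: Tw_def)

lemma tw_arr_iff: "((I, a), (J, b), f, F) \<in> tw_arr C \<longleftrightarrow>
   (I, a) \<in> tw_obj C \<and> (J, b) \<in> tw_obj C \<and> f \<in> I \<rightarrow>\<^sub>E J \<and> F \<in> extensional I \<and>
   (\<forall>i\<in>I. F i \<in> hom C (a i) (b (f i)))"
  by (simp add: tw_arr_def)

lemma restrict_eq_extensionalI:
  "F \<in> extensional L \<Longrightarrow> (\<And>l. l \<in> L \<Longrightarrow> G l = F l) \<Longrightarrow> restrict G L = F"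
  by (auto simp: restrict_def extensional_def)

lemma is_pullback_mediator_ex1:
  assumes "is_pullback D f g p q"
    and "p' \<in> hom D x (Dom D f)" "q' \<in> hom D x (Dom D g)" "Comp D f p' = Comp D g q'"
  shows "\<exists>!u. u \<in> hom D x (Dom D p) \<and> Comp D p u = p' \<and> Comp D q u = q'"
proof -
  have "p' \<in> Arr D" "q' \<in> Arr D" "Dom D p' = Dom D q'" "Cod D p' = Dom D f" "Cod D q' = Dom D g"
    and x: "x = Dom D p'"
    using assms(2,3) by (simp_all add: hom_def)
  with assms(1,4) show ?thesis
    unfolding is_pullback_def x by blast
qed

text \<open>Index sets of the twist are sets of naturals, so pairs of indices are encoded.\<close>

definition idx1 :: "nat \<Rightarrow> nat" where "idx1 n = fst (prod_decode n)"
definition idx2 :: "nat \<Rightarrow> nat" where "idx2 n = snd (prod_decode n)"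

lemma idx_prod_encode [simp]: "idx1 (prod_encode (i, j)) = i" "idx2 (prod_encode (i, j)) = j"
  by (simp_all add: idx1_def idx2_def prod_encode_inverse)

lemma prod_encode_idx: "prod_encode (idx1 n, idx2 n) = n"
  by (simp add: idx1_def idx2_def prod_decode_inverse)

locale tw_cospan =
  fixes D :: "('o,'m) cat" and T :: "'o set"
    and I :: "nat set" and a :: "nat \<Rightarrow> 'o" and J :: "nat set" and b :: "nat \<Rightarrow> 'o"
    and K :: "nat set" and c :: "nat \<Rightarrow> 'o"
    and \<phi> :: "nat \<Rightarrow> nat" and \<Phi> :: "nat \<Rightarrow> 'm" and \<psi> :: "nat \<Rightarrow> nat" and \<Psi> :: "nat \<Rightarrow> 'm"
    and p :: "nat \<Rightarrow> nat \<Rightarrow> 'm" and q :: "nat \<Rightarrow> nat \<Rightarrow> 'm"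
  assumes codomain_closed: "\<And>h. h \<in> Arr D \<Longrightarrow> Dom D h \<in> T \<Longrightarrow> Cod D h \<in> T"
    and leg1_arr: "((I, a), (K, c), \<phi>, \<Phi>) \<in> tw_arr (full_sub D T)"
    and leg2_arr: "((J, b), (K, c), \<psi>, \<Psi>) \<in> tw_arr (full_sub D T)"
    and pullback: "\<And>i j. i \<in> I \<Longrightarrow> j \<in> J \<Longrightarrow> \<phi> i = \<psi> j \<Longrightarrow> is_pullback D (\<Phi> i) (\<Psi> j) (p i j) (q i j)"
begin

abbreviation "C \<equiv> full_sub D T"
abbreviation "leg1 \<equiv> ((I, a), (K, c), \<phi>, \<Phi>)"
abbreviation "leg2 \<equiv> ((J, b), (K, c), \<psi>, \<Psi>)"

definition P :: "nat set" where
  "P = prod_encode ` {(i, j) \<in> I \<times> J. \<phi> i = \<psi> j \<and> Dom D (p i j) \<in> T}"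

definition pb_fam :: "nat \<Rightarrow> 'o" where
  "pb_fam = (\<lambda>n\<in>P. Dom D (p (idx1 n) (idx2 n)))"

definition proj1 :: "('o,'m) twarr" where
  "proj1 = ((P, pb_fam), (I, a), (\<lambda>n\<in>P. idx1 n), (\<lambda>n\<in>P. p (idx1 n) (idx2 n)))"

definition proj2 :: "('o,'m) twarr" where
  "proj2 = ((P, pb_fam), (J, b), (\<lambda>n\<in>P. idx2 n), (\<lambda>n\<in>P. q (idx1 n) (idx2 n)))"

lemma leg_objs: "(I, a) \<in> tw_obj C" "(J, b) \<in> tw_obj C"
  using leg1_arr leg2_arr by (simp_all add: tw_arr_iff)

lemma leg_homs:
  "i \<in> I \<Longrightarrow> \<Phi> i \<in> hom D (a i) (c (\<phi> i))" "j \<in> J \<Longrightarrow> \<Psi> j \<in> hom D (b j) (c (\<psi> j))"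
  using leg1_arr leg2_arr by (auto simp: tw_arr_iff hom_full_sub_iff)

lemma pullback_hom:
  assumes "i \<in> I" "j \<in> J" "\<phi> i = \<psi> j"
  shows "p i j \<in> hom D (Dom D (p i j)) (a i)" "q i j \<in> hom D (Dom D (p i j)) (b j)"
    and "Comp D (\<Phi> i) (p i j) = Comp D (\<Psi> j) (q i j)"
  using pullback[OF assms] leg_homs(1)[OF assms(1)] leg_homs(2)[OF assms(2)]
  by (auto simp: is_pullback_def hom_def)

lemma prod_encode_mem_P_iff:
  "prod_encode (i, j) \<in> P \<longleftrightarrow> i \<in> I \<and> j \<in> J \<and> \<phi> i = \<psi> j \<and> Dom D (p i j) \<in> T"
  by (auto simp: P_def)

lemma mem_PD:
  assumes "n \<in> P"
  shows "idx1 n \<in> I" "idx2 n \<in> J" "\<phi> (idx1 n) = \<psi> (idx2 n)" "pb_fam n \<in> T"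
  using assms by (auto simp: P_def pb_fam_def)

lemma pb_obj: "(P, pb_fam) \<in> tw_obj C"
proof -
  have "finite I" "finite J"
    using leg_objs by (simp_all add: tw_obj_def)
  moreover have "P \<subseteq> prod_encode ` (I \<times> J)"
    by (auto simp: P_def)
  ultimately have "finite P"
    by (meson finite_SigmaI finite_imageI finite_subset)
  then show ?thesis
    using mem_PD by (auto simp: tw_obj_def pb_fam_def)
qed

lemma proj1_arr: "proj1 \<in> tw_arr C"
  using pb_obj leg_objs mem_PD pullback_hom
  by (auto simp: proj1_def tw_arr_iff hom_full_sub_iff pb_fam_def tw_obj_def)

lemma proj2_arr: "proj2 \<in> tw_arr C"
  using pb_obj leg_objs mem_PD pullback_hom
  by (auto simp: proj2_def tw_arr_iff hom_full_sub_iff pb_fam_def tw_obj_def)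

lemma proj_commute: "Comp (Tw C) leg1 proj1 = Comp (Tw C) leg2 proj2"
  using mem_PD pullback_hom(3) by (auto simp: proj1_def proj2_def intro!: restrict_ext)

end

locale tw_cone = tw_cospan +
  fixes L :: "nat set" and e and \<alpha> :: "nat \<Rightarrow> nat" and A and \<beta> :: "nat \<Rightarrow> nat" and B
  assumes cone1_arr: "((L, e), (I, a), \<alpha>, A) \<in> tw_arr (full_sub D T)"
    and cone2_arr: "((L, e), (J, b), \<beta>, B) \<in> tw_arr (full_sub D T)"
    and cone_commute: "Comp (Tw (full_sub D T)) ((I, a), (K, c), \<phi>, \<Phi>) ((L, e), (I, a), \<alpha>, A) =
                       Comp (Tw (full_sub D T)) ((J, b), (K, c), \<psi>, \<Psi>) ((L, e), (J, b), \<beta>, B)"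
begin

abbreviation "cone1 \<equiv> ((L, e), (I, a), \<alpha>, A)"
abbreviation "cone2 \<equiv> ((L, e), (J, b), \<beta>, B)"

lemma cone_components:
  assumes "l \<in> L"
  shows "\<alpha> l \<in> I" "\<beta> l \<in> J" "\<phi> (\<alpha> l) = \<psi> (\<beta> l)" "e l \<in> T"
    and "A l \<in> hom D (e l) (a (\<alpha> l))" "B l \<in> hom D (e l) (b (\<beta> l))"
    and "Comp D (\<Phi> (\<alpha> l)) (A l) = Comp D (\<Psi> (\<beta> l)) (B l)"
proof -
  have idx: "(\<lambda>l\<in>L. \<phi> (\<alpha> l)) = (\<lambda>l\<in>L. \<psi> (\<beta> l))"
    and comp: "(\<lambda>l\<in>L. Comp C (\<Phi> (\<alpha> l)) (A l)) = (\<lambda>l\<in>L. Comp C (\<Psi> (\<beta> l)) (B l))"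
    using cone_commute by (simp_all only: Tw_simps prod.inject)
  show "\<phi> (\<alpha> l) = \<psi> (\<beta> l)" "Comp D (\<Phi> (\<alpha> l)) (A l) = Comp D (\<Psi> (\<beta> l)) (B l)"
    using fun_cong[OF idx, of l] fun_cong[OF comp, of l] assms by simp_all
  show "\<alpha> l \<in> I" "\<beta> l \<in> J" "e l \<in> T" "A l \<in> hom D (e l) (a (\<alpha> l))" "B l \<in> hom D (e l) (b (\<beta> l))"
    using cone1_arr cone2_arr assms by (auto simp: tw_arr_iff tw_obj_def hom_full_sub_iff)
qed

lemma mediator_comp_ex1:
  assumes "l \<in> L"
  shows "\<exists>!h. h \<in> hom D (e l) (Dom D (p (\<alpha> l) (\<beta> l))) \<and>
              Comp D (p (\<alpha> l) (\<beta> l)) h = A l \<and> Comp D (q (\<alpha> l) (\<beta> l)) h = B l"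
proof (rule is_pullback_mediator_ex1)
  note l = cone_components[OF assms]
  show "is_pullback D (\<Phi> (\<alpha> l)) (\<Psi> (\<beta> l)) (p (\<alpha> l) (\<beta> l)) (q (\<alpha> l) (\<beta> l))"
    using pullback l(1-3) .
  show "A l \<in> hom D (e l) (Dom D (\<Phi> (\<alpha> l)))" "B l \<in> hom D (e l) (Dom D (\<Psi> (\<beta> l)))"
    using l(5,6) leg_homs(1)[OF l(1)] leg_homs(2)[OF l(2)] by (simp_all add: hom_def)
qed (rule cone_components(7)[OF assms])

definition mediator_comp :: "nat \<Rightarrow> _" where
  "mediator_comp l = (THE h. h \<in> hom D (e l) (Dom D (p (\<alpha> l) (\<beta> l))) \<and>
                             Comp D (p (\<alpha> l) (\<beta> l)) h = A l \<and> Comp D (q (\<alpha> l) (\<beta> l)) h = B l)"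

lemma mediator_comp:
  assumes "l \<in> L"
  shows "mediator_comp l \<in> hom D (e l) (Dom D (p (\<alpha> l) (\<beta> l)))"
    and "Comp D (p (\<alpha> l) (\<beta> l)) (mediator_comp l) = A l"
    and "Comp D (q (\<alpha> l) (\<beta> l)) (mediator_comp l) = B l"
  using theI'[OF mediator_comp_ex1[OF assms]] unfolding mediator_comp_def by blast+

lemma prod_encode_cone_mem_P:
  assumes "l \<in> L"
  shows "prod_encode (\<alpha> l, \<beta> l) \<in> P"
proof -
  have "Dom D (p (\<alpha> l) (\<beta> l)) \<in> T"
    using codomain_closed[of "mediator_comp l"] mediator_comp(1)[OF assms] cone_components(4)[OF assms]
    by (simp add: hom_def)
  then show ?thesis
    using cone_components(1-3)[OF assms] by (simp add: prod_encode_mem_P_iff)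
qed

definition mediator where
  "mediator = ((L, e), (P, pb_fam), (\<lambda>l\<in>L. prod_encode (\<alpha> l, \<beta> l)), (\<lambda>l\<in>L. mediator_comp l))"

lemma mediator_arr: "mediator \<in> hom (Tw C) (L, e) (P, pb_fam)"
proof -
  have "mediator \<in> tw_arr C"
    unfolding mediator_def tw_arr_iff
  proof (intro conjI ballI)
    show "(L, e) \<in> tw_obj C"
      using cone1_arr by (simp add: tw_arr_iff)
    show "(P, pb_fam) \<in> tw_obj C"
      by (rule pb_obj)
    show "(\<lambda>l\<in>L. prod_encode (\<alpha> l, \<beta> l)) \<in> L \<rightarrow>\<^sub>E P"
      using prod_encode_cone_mem_P by auto
    show "(\<lambda>l\<in>L. mediator_comp l) \<in> extensional L"
      by simp
    fix l
    assume l: "l \<in> L"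
    then have "pb_fam (prod_encode (\<alpha> l, \<beta> l)) = Dom D (p (\<alpha> l) (\<beta> l))"
      using prod_encode_cone_mem_P by (simp add: pb_fam_def)
    then show "restrict mediator_comp L l \<in>
        hom C (e l) (pb_fam (restrict (\<lambda>l. prod_encode (\<alpha> l, \<beta> l)) L l))"
      using l mediator_comp(1)[OF l] cone_components(4)[OF l] mem_PD(4)[OF prod_encode_cone_mem_P[OF l]]
      by (simp add: hom_full_sub_iff)
  qed
  then show ?thesis
    by (simp add: hom_def mediator_def)
qed

lemma proj1_mediator: "Comp (Tw C) proj1 mediator = cone1"
proof -
  have "\<alpha> \<in> L \<rightarrow>\<^sub>E I" "A \<in> extensional L"
    using cone1_arr by (simp_all add: tw_arr_iff)
  then have idx: "(\<lambda>l\<in>L. restrict idx1 P (restrict (\<lambda>l. prod_encode (\<alpha> l, \<beta> l)) L l)) = \<alpha>"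
    and comp: "(\<lambda>l\<in>L. Comp C (restrict (\<lambda>n. p (idx1 n) (idx2 n)) P
                  (restrict (\<lambda>l. prod_encode (\<alpha> l, \<beta> l)) L l)) (restrict mediator_comp L l)) = A"
    using prod_encode_cone_mem_P mediator_comp(2) by (auto simp: PiE_iff intro!: restrict_eq_extensionalI)
  show ?thesis
    unfolding proj1_def mediator_def Tw_simps idx comp ..
qed

lemma proj2_mediator: "Comp (Tw C) proj2 mediator = cone2"
proof -
  have "\<beta> \<in> L \<rightarrow>\<^sub>E J" "B \<in> extensional L"
    using cone2_arr by (simp_all add: tw_arr_iff)
  then have idx: "(\<lambda>l\<in>L. restrict idx2 P (restrict (\<lambda>l. prod_encode (\<alpha> l, \<beta> l)) L l)) = \<beta>"
    and comp: "(\<lambda>l\<in>L. Comp C (restrict (\<lambda>n. q (idx1 n) (idx2 n)) P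
                  (restrict (\<lambda>l. prod_encode (\<alpha> l, \<beta> l)) L l)) (restrict mediator_comp L l)) = B"
    using prod_encode_cone_mem_P mediator_comp(3) by (auto simp: PiE_iff intro!: restrict_eq_extensionalI)
  show ?thesis
    unfolding proj2_def mediator_def Tw_simps idx comp ..
qed

lemma mediator_unique:
  assumes u: "u \<in> hom (Tw C) (L, e) (P, pb_fam)"
    and u1: "Comp (Tw C) proj1 u = cone1" and u2: "Comp (Tw C) proj2 u = cone2"
  shows "u = mediator"
proof -
  obtain \<gamma> \<Gamma> where u_eq: "u = ((L, e), (P, pb_fam), \<gamma>, \<Gamma>)"
    using u by (cases u) (auto simp: hom_def)
  have \<gamma>: "\<gamma> \<in> L \<rightarrow>\<^sub>E P" and \<Gamma>: "\<Gamma> \<in> extensional L"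
    and \<Gamma>_hom: "\<And>l. l \<in> L \<Longrightarrow> \<Gamma> l \<in> hom D (e l) (pb_fam (\<gamma> l))"
    using u by (auto simp: u_eq hom_def tw_arr_iff hom_full_sub_iff)
  have idx1_eq: "(\<lambda>l\<in>L. restrict idx1 P (\<gamma> l)) = \<alpha>"
    and p_eq: "(\<lambda>l\<in>L. Comp D (restrict (\<lambda>n. p (idx1 n) (idx2 n)) P (\<gamma> l)) (\<Gamma> l)) = A"
    and idx2_eq: "(\<lambda>l\<in>L. restrict idx2 P (\<gamma> l)) = \<beta>"
    and q_eq: "(\<lambda>l\<in>L. Comp D (restrict (\<lambda>n. q (idx1 n) (idx2 n)) P (\<gamma> l)) (\<Gamma> l)) = B"
    using u1 u2 by (simp_all add: u_eq proj1_def proj2_def)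
  have components: "\<gamma> l = prod_encode (\<alpha> l, \<beta> l) \<and> \<Gamma> l = mediator_comp l" if l: "l \<in> L" for l
  proof -
    have "\<gamma> l \<in> P" using \<gamma> l by auto
    then have \<gamma>_l: "\<gamma> l = prod_encode (\<alpha> l, \<beta> l)"
      using fun_cong[OF idx1_eq, of l] fun_cong[OF idx2_eq, of l] l prod_encode_idx[of "\<gamma> l"] by simp
    have "\<Gamma> l \<in> hom D (e l) (Dom D (p (\<alpha> l) (\<beta> l)))"
      using \<Gamma>_hom[OF l] prod_encode_cone_mem_P[OF l] by (simp add: \<gamma>_l pb_fam_def)
    moreover have "Comp D (p (\<alpha> l) (\<beta> l)) (\<Gamma> l) = A l" "Comp D (q (\<alpha> l) (\<beta> l)) (\<Gamma> l) = B l"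
      using fun_cong[OF p_eq, of l] fun_cong[OF q_eq, of l] l \<open>\<gamma> l \<in> P\<close> by (simp_all add: \<gamma>_l)
    ultimately show ?thesis
      using \<gamma>_l mediator_comp[OF l] mediator_comp_ex1[OF l] by blast
  qed
  have "\<gamma> = (\<lambda>l\<in>L. prod_encode (\<alpha> l, \<beta> l))" "\<Gamma> = (\<lambda>l\<in>L. mediator_comp l)"
    using \<gamma> \<Gamma> components by (auto intro!: restrict_eq_extensionalI[symmetric] simp: PiE_iff)
  then show ?thesis
    by (simp add: u_eq mediator_def)
qed

end

context tw_cospan
begin

lemma is_pullback_proj: "is_pullback (Tw C) leg1 leg2 proj1 proj2"
  unfolding is_pullback_def
proof (intro conjI ballI impI)
  show "leg1 \<in> Arr (Tw C)" "leg2 \<in> Arr (Tw C)" "proj1 \<in> Arr (Tw C)" "proj2 \<in> Arr (Tw C)"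
    using leg1_arr leg2_arr proj1_arr proj2_arr by simp_all
  show "Comp (Tw C) leg1 proj1 = Comp (Tw C) leg2 proj2"
    by (rule proj_commute)
  fix p' q'
  assume "p' \<in> Arr (Tw C)" "q' \<in> Arr (Tw C)"
    and cone: "Dom (Tw C) p' = Dom (Tw C) q' \<and> Cod (Tw C) p' = Dom (Tw C) leg1 \<and>
      Cod (Tw C) q' = Dom (Tw C) leg2 \<and> Comp (Tw C) leg1 p' = Comp (Tw C) leg2 q'"
  obtain X Y \<alpha> A where p'_eq: "p' = (X, Y, \<alpha>, A)"
    by (rule prod_cases4)
  obtain X' Y' \<beta> B where q'_eq: "q' = (X', Y', \<beta>, B)"
    by (rule prod_cases4)
  obtain L e where X: "X = (L, e)"
    by (rule prod.exhaust)
  have p': "p' = ((L, e), (I, a), \<alpha>, A)" and q': "q' = ((L, e), (J, b), \<beta>, B)"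
    using cone[THEN conjunct1] cone[THEN conjunct2, THEN conjunct1] cone[THEN conjunct2, THEN conjunct2, THEN conjunct1]
    by (simp_all add: p'_eq q'_eq X)
  interpret tw_cone D T I a J b K c \<phi> \<Phi> \<psi> \<Psi> p q L e \<alpha> A \<beta> B
    by (intro tw_cone.intro tw_cone_axioms.intro tw_cospan_axioms)
      (use \<open>p' \<in> Arr (Tw C)\<close> \<open>q' \<in> Arr (Tw C)\<close> cone in \<open>simp_all only: p' q' Tw_simps\<close>)
  have "Dom (Tw C) p' = (L, e)" "Dom (Tw C) proj1 = (P, pb_fam)"
    by (simp_all add: p' proj1_def)
  then show "\<exists>!u. u \<in> hom (Tw C) (Dom (Tw C) p') (Dom (Tw C) proj1) \<and>
    Comp (Tw C) proj1 u = p' \<and> Comp (Tw C) proj2 u = q'"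
    using mediator_arr proj1_mediator proj2_mediator mediator_unique unfolding p' q' by metis
qed (simp_all add: proj1_def proj2_def)

end

theorem has_pullbacks_Tw_full_sub:
  assumes "has_pullbacks D"
    and codomain_closed: "\<And>h. h \<in> Arr D \<Longrightarrow> Dom D h \<in> T \<Longrightarrow> Cod D h \<in> T"
  shows "has_pullbacks (Tw (full_sub D T))"
  unfolding has_pullbacks_def
proof (intro ballI impI)
  fix f g
  assume f: "f \<in> Arr (Tw (full_sub D T))" and g: "g \<in> Arr (Tw (full_sub D T))"
    and "Cod (Tw (full_sub D T)) f = Cod (Tw (full_sub D T)) g"
  then obtain I a J b K c \<phi> \<Phi> \<psi> \<Psi> where f_eq: "f = ((I, a), (K, c), \<phi>, \<Phi>)"
    and g_eq: "g = ((J, b), (K, c), \<psi>, \<Psi>)"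
    by (cases f, cases g) auto
  have "\<exists>pq. is_pullback D (\<Phi> i) (\<Psi> j) (fst pq) (snd pq)"
    if "i \<in> I" "j \<in> J" "\<phi> i = \<psi> j" for i j
  proof -
    have "\<Phi> i \<in> hom D (a i) (c (\<phi> i))" "\<Psi> j \<in> hom D (b j) (c (\<psi> j))"
      using f g that by (auto simp: f_eq g_eq tw_arr_iff hom_full_sub_iff)
    then show ?thesis
      using \<open>has_pullbacks D\<close> that unfolding has_pullbacks_def hom_def by auto
  qed
  then obtain pb where "\<And>i j. i \<in> I \<Longrightarrow> j \<in> J \<Longrightarrow> \<phi> i = \<psi> j \<Longrightarrow>
      is_pullback D (\<Phi> i) (\<Psi> j) (fst (pb i j)) (snd (pb i j))"
    by metis
  then interpret tw_cospan D T I a J b K c \<phi> \<Phi> \<psi> \<Psi> "\<lambda>i j. fst (pb i j)" "\<lambda>i j. snd (pb i j)"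
    using assms f g by unfold_locales (simp_all add: f_eq g_eq)
  show "\<exists>p q. is_pullback (Tw (full_sub D T)) f g p q"
    unfolding f_eq g_eq using is_pullback_proj by blast
qed

theorem mainTheorem4:
  fixes D :: "('o,'m) cat" and S :: "'o set"
  assumes "category D"
    and "has_pullbacks D"
    and "S \<subseteq> Obj D"
    and "\<forall>f. iso_arr D f \<and> Cod D f \<in> S \<longrightarrow> Dom D f \<in> S"
    and "\<forall>A\<in>S. \<forall>B\<in>Obj D. hom D B A \<noteq> {} \<longrightarrow> B \<in> S"
  shows "has_pullbacks (Tw (full_sub D (Obj D - S)))"
proof (rule has_pullbacks_Tw_full_sub[OF assms(2)])
  fix h
  assume h: "h \<in> Arr D" and "Dom D h \<in> Obj D - S"
  moreover have "Cod D h \<in> Obj D" "h \<in> hom D (Dom D h) (Cod D h)"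
    using h \<open>category D\<close> by (auto simp: category_def hom_def)
  ultimately show "Cod D h \<in> Obj D - S"
    using assms(5) by blast
qed

end
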